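(* For $n\in\mathbb{N}$, $z(n)=f(n)$ if and only if $n=0$ or $n=F_{2k+1}$ for some integer $k\ge0$.
   Context: $\mathbb{N}=\{0,1,2,\dots\}$. Fibonacci numbers: $F_0=0$, $F_1=1$, $F_k=F_{k-1}+F_{k-2}$. The sequence $f:\mathbb{N}\to\mathbb{N}$ is defined greedily: $f(0)=0$, and for $n\ge1$, $f(n)$ is the least natural number such that (i) $f(n)\notin\{f(0),f(1),\dots,f(n-1)\}$ and (ii) $\sum_{1\le i\le n} f(i)$ is divisible by $n$. The sequence $z:\mathbb{N}\to\mathbb{N}$ is defined greedily: $z(0)=0$, and for $n\ge1$, $z(n)$ is the least natural number such that (i) $z(n)\notin\{z(0),\dots,z(n-1)\}$ and (ii) $\sum_{2\le i\le n} z(i)$ is divisible by $n+1$ (the empty sum being $0$). *)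

theory Defs
  imports Main "HOL-Number_Theory.Fib"
begin

fun fvals :: "nat \<Rightarrow> nat list" where
  "fvals 0 = [0]"
| "fvals (Suc n) = fvals n @
     [LEAST v. v \<notin> set (fvals n) \<and> Suc n dvd (sum_list (tl (fvals n)) + v)]"

definition fseq :: "nat \<Rightarrow> nat" where
  "fseq n = last (fvals n)"

text \<open>zvals n = [z 0, ..., z n]; condition: sum over 2 \<le> i \<le> n of z i divisible by n+1.\<close>
fun zvals :: "nat \<Rightarrow> nat list" where
  "zvals 0 = [0]"
| "zvals (Suc n) = zvals n @
     [LEAST v. v \<notin> set (zvals n) \<and>
        (Suc n + 1) dvd (if Suc n \<ge> 2 then sum_list (drop 2 (zvals n)) + v else 0)]"

definition zseq :: "nat \<Rightarrow> nat" where
  "zseq n = last (zvals n)"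

end

theory Submission
  imports Defs
begin

(*
  Put \<alpha> = (sqrt 5 - 1) / 2 and b m = \<lfloor>m \<alpha>\<rfloor>. Then
    f (m + 1) = b m + 1 + [b (m + 1) > b m] (m + 1)   and   f 1 + ... + f n = n (b n + 1),
  and z has the same shape one index later:
    z n = l (n - 1) + [l n > l (n - 1)] (n + 1)   and   z 2 + ... + z n = (n + 1) l n,
  where l n = b (n + 1) - [n + 1 = F (2k + 1) for some k \<ge> 1]. Both closed forms are checked
  against the greedy rule: after the previous terms, the least admissible value is the current
  level if that is still unused and the level plus the modulus otherwise, and the level has been
  used exactly when it jumps. For f this comes down to the values of b (b m + j), computed from
  \<alpha>\<^sup>2 = 1 - \<alpha>; for z one also needs F (2k + 1) \<alpha> = F (2k) + \<alpha> ^ (2k + 1), which fixes b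
  around the odd-indexed Fibonacci numbers. Comparing the closed forms, z n = f n exactly there.
*)

section \<open>Least unused solutions of a residue condition\<close>

lemma dvd_residue_cases:
  fixes n c y :: nat
  assumes "Suc n dvd n * c + y" "c \<le> n"
  shows "y = c \<or> c + Suc n \<le> y"
proof (cases "c \<le> y")
  case True
  then have "n * c + y = Suc n * c + (y - c)" by simp
  with assms(1) have "Suc n dvd y - c" by (metis dvd_add_right_iff dvd_triv_left)
  then show ?thesis using True by (cases "y = c") (auto dest: dvd_imp_le)
next
  case False
  then have "n * c + y + (c - y) = Suc n * c" by simp
  with assms(1) have "Suc n dvd c - y" by (metis dvd_add_right_iff dvd_triv_left)
  then have "Suc n \<le> c - y" using False by (intro dvd_imp_le) auto
  with assms(2) show ?thesis by simp
qed

lemma Least_unused_residue: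
  fixes n c v :: nat and U :: "nat set"
  assumes "c \<le> n" "v \<notin> U" "v = c \<or> c \<in> U \<and> v = c + Suc n"
  shows "(LEAST y. y \<notin> U \<and> Suc n dvd n * c + y) = v"
proof (rule Least_equality)
  have "n * c + c = Suc n * c" "n * c + (c + Suc n) = Suc n * Suc c" by simp_all
  then show "v \<notin> U \<and> Suc n dvd n * c + v" using assms(2,3) by (metis dvd_triv_left)
next
  fix y assume "y \<notin> U \<and> Suc n dvd n * c + y"
  then show "v \<le> y" using dvd_residue_cases[of n c y] assms by auto
qed

lemma sum_list_map_upt_Suc: "sum_list (map h [a..<Suc n]) = sum h {a..n}"
  by (simp only: interv_sum_list_conv_sum_set_nat set_upt atLeastLessThanSuc_atLeastAtMost)

section \<open>The lower Beatty sequence of the golden ratio conjugate\<close>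

definition \<alpha> :: real where "\<alpha> = (sqrt 5 - 1) / 2"

lemma alpha_sq: "\<alpha> * \<alpha> = 1 - \<alpha>"
  unfolding \<alpha>_def by (simp add: field_simps)

lemma alpha_cube: "\<alpha> ^ 3 = 2 * \<alpha> - 1"
  by (simp add: power3_eq_cube alpha_sq algebra_simps)

lemma alpha_bounds: "3/5 < \<alpha>" "\<alpha> < 5/8"
proof -
  have "sqrt ((11/5) ^ 2) < sqrt (5::real)" "sqrt (5::real) < sqrt ((9/4) ^ 2)"
    by (intro real_sqrt_less_mono; simp add: power2_eq_square)+
  then show "3/5 < \<alpha>" "\<alpha> < 5/8" unfolding \<alpha>_def by simp_all
qed

lemma int_square_eq_five_times_square:
  fixes r m :: int
  assumes "r ^ 2 = 5 * m ^ 2"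
  shows "m = 0"
  using assms
proof (induction "nat \<bar>m\<bar>" arbitrary: r m rule: less_induct)
  case less
  have "r ^ 2 mod 5 = 0" using less.prems by simp
  then have "(r mod 5) ^ 2 mod 5 = 0" by (metis power_mod)
  moreover have "r mod 5 \<in> {0, 1, 2, 3, 4}" by auto
  ultimately have "r mod 5 = 0" by auto
  then obtain s where "r = 5 * s" by auto
  then have m_sq: "m ^ 2 = 5 * s ^ 2" using less.prems by (simp add: power_mult_distrib)
  show "m = 0"
  proof (rule ccontr)
    assume "m \<noteq> 0"
    with m_sq have "s ^ 2 < m ^ 2" by (smt (verit) zero_less_power2)
    then have "nat \<bar>s\<bar> < nat \<bar>m\<bar>" using abs_le_square_iff not_less by auto
    with less.hyps m_sq have "s = 0" by blast
    with m_sq \<open>m \<noteq> 0\<close> show False by simp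
  qed
qed

lemma mult_alpha_in_Ints_iff: "real m * \<alpha> \<in> \<int> \<longleftrightarrow> m = 0"
proof
  assume "real m * \<alpha> \<in> \<int>"
  then obtain k where "real m * \<alpha> = of_int k" by (elim Ints_cases)
  then have "sqrt 5 * real m = of_int (2 * k + int m)" unfolding \<alpha>_def by (simp add: field_simps)
  then have "(sqrt 5 * real m) ^ 2 = of_int ((2 * k + int m) ^ 2)" by simp
  then have "of_int ((2 * k + int m) ^ 2) = (of_int (5 * int m ^ 2) :: real)"
    by (simp add: power_mult_distrib)
  then have "(2 * k + int m) ^ 2 = 5 * int m ^ 2" by (simp only: of_int_eq_iff)
  then show "m = 0" using int_square_eq_five_times_square[of "2 * k + int m" "int m"] by simp
qed simp

definition beatty :: "nat \<Rightarrow> nat" where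
  "beatty m = nat \<lfloor>real m * \<alpha>\<rfloor>"

lemma of_nat_beatty: "real (beatty m) = real m * \<alpha> - frac (real m * \<alpha>)"
  unfolding beatty_def frac_def using alpha_bounds by simp

lemma beatty_eqI: "real k \<le> real m * \<alpha> \<Longrightarrow> real m * \<alpha> < real k + 1 \<Longrightarrow> beatty m = k"
  unfolding beatty_def by (metis floor_unique nat_int of_int_of_nat_eq)

lemma beatty_mono: "m \<le> n \<Longrightarrow> beatty m \<le> beatty n"
  unfolding beatty_def using alpha_bounds by (intro nat_mono floor_mono mult_right_mono) auto

lemma beatty_less: "0 < m \<Longrightarrow> beatty m < m"
proof -
  assume "0 < m"
  then have "real m * \<alpha> < real m" using alpha_bounds by simp
  then have "real (beatty m) < real m"
    using of_nat_beatty[of m] frac_ge_0[of "real m * \<alpha>"] by linarith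
  then show ?thesis by simp
qed

lemma frac_mult_alpha_pos: "0 < m \<Longrightarrow> 0 < frac (real m * \<alpha>)"
  using mult_alpha_in_Ints_iff by simp

lemma beatty_Suc_cases:
  "beatty (Suc m) = (if 1 \<le> frac (real m * \<alpha>) + \<alpha> then Suc (beatty m) else beatty m)"
proof -
  have "real (Suc m) * \<alpha> = real (beatty m) + (frac (real m * \<alpha>) + \<alpha>)"
    using of_nat_beatty[of m] by (simp add: algebra_simps)
  moreover have "0 \<le> frac (real m * \<alpha>)" "frac (real m * \<alpha>) < 1"
    using frac_lt_1 by auto
  ultimately show ?thesis
    using alpha_bounds by (auto intro!: beatty_eqI)
qed

definition beatty_jumps :: "nat \<Rightarrow> bool" where
  "beatty_jumps m \<longleftrightarrow> beatty (Suc m) = Suc (beatty m)"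

lemma beatty_jumps_iff: "beatty_jumps m \<longleftrightarrow> 1 \<le> frac (real m * \<alpha>) + \<alpha>"
  unfolding beatty_jumps_def beatty_Suc_cases by simp

lemma beatty_Suc: "beatty (Suc m) = beatty m + of_bool (beatty_jumps m)"
  unfolding beatty_jumps_iff beatty_Suc_cases by simp

lemma frac_gt_if_beatty_jumps:
  assumes "beatty_jumps m"
  shows "1 - \<alpha> < frac (real m * \<alpha>)"
proof -
  have "frac (real (Suc m) * \<alpha>) = frac (real m * \<alpha>) + \<alpha> - 1"
    using assms of_nat_beatty[of m] of_nat_beatty[of "Suc m"] unfolding beatty_jumps_def
    by (simp add: algebra_simps)
  then show ?thesis using frac_mult_alpha_pos[of "Suc m"] by simp
qed

lemma beatty_0 [simp]: "beatty 0 = 0"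
  unfolding beatty_def by simp

lemma beatty_Suc_0 [simp]: "beatty (Suc 0) = 0"
  using alpha_bounds by (intro beatty_eqI) auto

lemma beatty_2 [simp]: "beatty 2 = 1"
  using alpha_bounds by (intro beatty_eqI) auto

lemma not_beatty_jumps_0 [simp]: "\<not> beatty_jumps 0"
  unfolding beatty_jumps_def by simp

lemma beatty_jumps_imp_pos: "beatty_jumps m \<Longrightarrow> 0 < m"
  by (cases m) simp_all

lemma beatty_jumps_inj:
  assumes "beatty_jumps a" "beatty_jumps b" "beatty a = beatty b"
  shows "a = b"
proof (rule ccontr)
  assume "a \<noteq> b"
  then have "beatty (Suc a) \<le> beatty b \<or> beatty (Suc b) \<le> beatty a"
    by (metis beatty_mono Suc_leI linorder_neq_iff)
  with assms show False unfolding beatty_jumps_def by simp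
qed

lemma of_nat_beatty_add_mult_alpha:
  "real (beatty m + j) * \<alpha> =
     real m - real (beatty m) + real j * \<alpha> - frac (real m * \<alpha>) - frac (real m * \<alpha>) * \<alpha>"
proof -
  have "real (beatty m) * \<alpha> = (real m * \<alpha> - frac (real m * \<alpha>)) * \<alpha>"
    using of_nat_beatty[of m] by simp
  also have "\<dots> = real m * (\<alpha> * \<alpha>) - frac (real m * \<alpha>) * \<alpha>"
    by (simp add: algebra_simps)
  also have "\<dots> = real m - real m * \<alpha> - frac (real m * \<alpha>) * \<alpha>"
    unfolding alpha_sq by (simp add: algebra_simps)
  finally have "real (beatty m) * \<alpha> = real m - real m * \<alpha> - frac (real m * \<alpha>) * \<alpha>" .
  moreover have "real (beatty m + j) * \<alpha> = real (beatty m) * \<alpha> + real j * \<alpha>"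
    by (simp add: algebra_simps)
  ultimately show ?thesis using of_nat_beatty[of m] by linarith
qed

lemma beatty_at_non_jump:
  assumes "\<not> beatty_jumps m" "0 < m"
  shows "beatty (beatty m) = m - beatty m - 1" "beatty (beatty m + 1) = m - beatty m"
proof -
  let ?x = "frac (real m * \<alpha>)"
  have x: "0 < ?x" "?x < 1 - \<alpha>" using assms frac_mult_alpha_pos beatty_jumps_iff by auto
  have "?x * \<alpha> < (1 - \<alpha>) * \<alpha>" using x alpha_bounds by (intro mult_strict_right_mono) auto
  then have xa: "0 < ?x * \<alpha>" "?x * \<alpha> < 2 * \<alpha> - 1"
    using x alpha_bounds alpha_sq by (auto simp: algebra_simps)
  have le: "beatty m + 1 \<le> m" using beatty_less assms(2) by (simp add: Suc_le_eq)
  then have r: "real (m - beatty m - 1) = real m - real (beatty m) - 1"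
    "real (m - beatty m) = real m - real (beatty m)" by (simp_all add: of_nat_diff)
  have e0: "real (beatty m) * \<alpha> = real m - real (beatty m) - ?x - ?x * \<alpha>"
    using of_nat_beatty_add_mult_alpha[of m 0] by simp
  have e1: "real (beatty m + 1) * \<alpha> = real m - real (beatty m) + \<alpha> - ?x - ?x * \<alpha>"
    using of_nat_beatty_add_mult_alpha[of m 1] by simp
  show "beatty (beatty m) = m - beatty m - 1"
    by (rule beatty_eqI) (use e0 r x xa alpha_bounds in linarith)+
  show "beatty (beatty m + 1) = m - beatty m"
    by (rule beatty_eqI) (use e1 r x xa alpha_bounds in linarith)+
qed

lemma beatty_at_jump:
  assumes "beatty_jumps m"
  shows "beatty (beatty m + 1) = m - beatty m - 1"
    and "beatty (beatty m + (m + 1)) = m" "beatty (beatty m + (m + 2)) = m"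
proof -
  let ?x = "frac (real m * \<alpha>)"
  have x: "1 - \<alpha> < ?x" "?x < 1" using frac_gt_if_beatty_jumps[OF assms] frac_lt_1 by auto
  have "(1 - \<alpha>) * \<alpha> < ?x * \<alpha>" using x alpha_bounds by (intro mult_strict_right_mono) auto
  then have xa: "2 * \<alpha> - 1 < ?x * \<alpha>" "?x * \<alpha> < \<alpha>"
    using x alpha_bounds alpha_sq by (auto simp: algebra_simps)
  have "beatty m + 1 \<le> m" using beatty_less beatty_jumps_imp_pos[OF assms] by (simp add: Suc_le_eq)
  then have r: "real (m - beatty m - 1) = real m - real (beatty m) - 1" by (simp add: of_nat_diff)
  have e1: "real (beatty m + 1) * \<alpha> = real m - real (beatty m) + \<alpha> - ?x - ?x * \<alpha>"
    using of_nat_beatty_add_mult_alpha[of m 1] by simp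
  show "beatty (beatty m + 1) = m - beatty m - 1"
    by (rule beatty_eqI) (use e1 r x xa alpha_bounds in linarith)+
  have "real (beatty m + (m + j)) * \<alpha> = real m + real j * \<alpha> - ?x * \<alpha>" for j
  proof -
    have "real (m + j) * \<alpha> = real m * \<alpha> + real j * \<alpha>" by (simp add: distrib_right)
    then show ?thesis
      using of_nat_beatty_add_mult_alpha[of m "m + j"] of_nat_beatty[of m] by linarith
  qed
  note e = this
  show "beatty (beatty m + (m + 1)) = m"
    by (rule beatty_eqI) (use e[of 1] xa alpha_bounds in simp_all)
  show "beatty (beatty m + (m + 2)) = m"
    by (rule beatty_eqI) (use e[of 2] xa alpha_bounds in simp_all)
qed

section \<open>A closed form for \<open>f\<close>\<close>

definition f_closed :: "nat \<Rightarrow> nat" where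
  "f_closed n = (case n of 0 \<Rightarrow> 0 | Suc m \<Rightarrow> beatty m + 1 + (if beatty_jumps m then Suc m else 0))"

lemma f_closed_0 [simp]: "f_closed 0 = 0"
  unfolding f_closed_def by simp

lemma f_closed_Suc: "f_closed (Suc m) = beatty m + 1 + (if beatty_jumps m then Suc m else 0)"
  unfolding f_closed_def by simp

lemma f_closed_f_closed [simp]: "f_closed (f_closed n) = n"
proof (cases n)
  case (Suc m)
  show ?thesis
  proof (cases "beatty_jumps m")
    case True
    then have "\<not> beatty_jumps (beatty m + (m + 1))"
      using beatty_at_jump(2,3)[OF True] unfolding beatty_jumps_def by simp
    with True show ?thesis using beatty_at_jump(2,3)[OF True] Suc by (simp add: f_closed_Suc)
  next
    case False
    show ?thesis
    proof (cases "m = 0")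
      case False
      note at = beatty_at_non_jump[OF \<open>\<not> beatty_jumps m\<close>] beatty_less[of m]
      then have "beatty_jumps (beatty m)" unfolding beatty_jumps_def using False by simp
      then show ?thesis using \<open>\<not> beatty_jumps m\<close> at False Suc by (simp add: f_closed_Suc)
    qed (use Suc in \<open>simp add: f_closed_Suc\<close>)
  qed
qed simp

lemma inj_f_closed: "inj f_closed"
  by (metis injI f_closed_f_closed)

lemma sum_f_closed: "(\<Sum>i=1..n. f_closed i) = n * (beatty n + 1)"
proof (induction n)
  case (Suc n)
  then show ?case by (cases "beatty_jumps n") (simp_all add: f_closed_Suc beatty_Suc)
qed simp

lemma f_closed_at_jump:
  assumes "beatty_jumps n"
  shows "f_closed (beatty n + 1) \<in> {1..n}"
  using assms beatty_at_jump(1)[OF assms] beatty_less[OF beatty_jumps_imp_pos[OF assms]]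
    beatty_mono[of "beatty n" "Suc (beatty n)"]
  by (cases "beatty_jumps (beatty n)") (auto simp: f_closed_Suc beatty_jumps_def)

lemma fvals_eq_map_f_closed: "fvals n = map f_closed [0..<Suc n]"
proof (induction n)
  case (Suc n)
  have used: "set (fvals n) = f_closed ` {0..n}"
    unfolding Suc.IH by (simp only: set_map set_upt atLeastLessThanSuc_atLeastAtMost)
  have "tl (fvals n) = map f_closed [1..<Suc n]"
    using Suc.IH by (simp add: upt_rec)
  then have sum: "sum_list (tl (fvals n)) = n * (beatty n + 1)"
    by (simp only: sum_list_map_upt_Suc sum_f_closed)
  have "(LEAST v. v \<notin> set (fvals n) \<and> Suc n dvd sum_list (tl (fvals n)) + v) = f_closed (Suc n)"
  proof (cases "n = 0")
    case True
    then show ?thesis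
      using Suc.IH by (simp add: f_closed_Suc) (rule Least_equality; simp)
  next
    case False
    have "beatty_jumps n \<Longrightarrow> beatty n + 1 \<in> f_closed ` {0..n}"
      using f_closed_at_jump
      by (metis atLeastatMost_subset_iff f_closed_f_closed image_eqI le0 order_refl subsetD)
    moreover have "f_closed (Suc n) \<notin> f_closed ` {0..n}"
      using inj_f_closed by (auto simp: inj_eq)
    ultimately show ?thesis unfolding used sum
      using beatty_less[of n] False
      by (intro Least_unused_residue) (auto simp: f_closed_Suc)
  qed
  then show ?case using Suc.IH by simp
qed simp

lemma fseq_eq_f_closed: "fseq n = f_closed n"
  unfolding fseq_def fvals_eq_map_f_closed by simp

section \<open>Odd-indexed Fibonacci numbers\<close>

lemma fib_Suc_mult_alpha: "real (fib (Suc j)) * \<alpha> - real (fib j) = - ((- \<alpha>) ^ Suc j)"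
proof (induction j)
  case (Suc j)
  have "real (fib (Suc (Suc j))) * \<alpha> - real (fib (Suc j))
      = - \<alpha> * (real (fib (Suc j)) * \<alpha> - real (fib j)) + real (fib (Suc j)) * (\<alpha> * \<alpha> + \<alpha> - 1)"
    by (simp add: algebra_simps)
  then show ?case using Suc.IH by (simp add: alpha_sq)
qed simp

lemma fib_odd_mult_alpha: "real (fib (2 * k + 1)) * \<alpha> = real (fib (2 * k)) + \<alpha> ^ (2 * k + 1)"
  using fib_Suc_mult_alpha[of "2 * k"] by (simp add: power_minus_odd)

lemma alpha_odd_power_bounds:
  assumes "1 \<le> k"
  shows "0 < \<alpha> ^ (2 * k + 1)" "\<alpha> ^ (2 * k + 1) + \<alpha> < 1"
proof -
  show "0 < \<alpha> ^ (2 * k + 1)" using alpha_bounds by simp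
  have "\<alpha> ^ (2 * k + 1) \<le> \<alpha> ^ 3" using assms alpha_bounds by (intro power_decreasing) auto
  then show "\<alpha> ^ (2 * k + 1) + \<alpha> < 1" using alpha_cube alpha_bounds by linarith
qed

lemma fib_strict_mono: "2 \<le> a \<Longrightarrow> a < b \<Longrightarrow> fib a < fib b"
proof (induction b rule: less_induct)
  case (less b)
  then obtain c where b: "b = Suc c" and "a \<le> c" by (cases b) auto
  have "0 < fib (c - 1)" using \<open>2 \<le> a\<close> \<open>a \<le> c\<close> by (intro fib_neq_0_nat) simp
  then have "fib c < fib b" using b \<open>2 \<le> a\<close> \<open>a \<le> c\<close> by (cases c) (auto simp: numeral_2_eq_2)
  moreover have "fib a \<le> fib c" using \<open>a \<le> c\<close> by (rule fib_mono)
  ultimately show ?case by simp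
qed

lemma fib_inj: "2 \<le> a \<Longrightarrow> 2 \<le> b \<Longrightarrow> fib a = fib b \<Longrightarrow> a = b"
  by (metis fib_strict_mono less_irrefl nat_neq_iff)

lemma fib_ge_3: "4 \<le> n \<Longrightarrow> 3 \<le> fib n"
  using fib_mono[of 4 n] by (simp add: numeral_eq_Suc)

lemma fib_even_pos: "1 \<le> k \<Longrightarrow> 1 \<le> fib (2 * k)"
  using fib_neq_0_nat[of "2 * k"] by simp

text \<open>The index bound \<open>k \<ge> 1\<close> leaves out \<open>F\<^sub>1 = 1\<close>, which behaves differently
  (it is also \<open>F\<^sub>2\<close>).\<close>

definition odd_fib :: "nat \<Rightarrow> bool" where
  "odd_fib q \<longleftrightarrow> (\<exists>k\<ge>1. q = fib (2 * k + 1))"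

lemma odd_fib_2: "odd_fib 2"
  unfolding odd_fib_def by (rule exI[of _ 1]) (simp add: numeral_eq_Suc)

lemma odd_fib_fib: "1 \<le> k \<Longrightarrow> odd_fib (fib (2 * k + 1))"
  unfolding odd_fib_def by blast

lemma fib_odd_ge_2: "1 \<le> k \<Longrightarrow> 2 \<le> fib (2 * k + 1)"
  using fib_mono[of 3 "2 * k + 1"] by (simp add: numeral_eq_Suc)

lemma odd_fib_ge_2: "odd_fib q \<Longrightarrow> 2 \<le> q"
  unfolding odd_fib_def using fib_odd_ge_2 by blast

lemma odd_fib_iff: "2 \<le> n \<Longrightarrow> odd_fib n \<longleftrightarrow> (\<exists>k. n = fib (2 * k + 1))"
  unfolding odd_fib_def by (metis One_nat_def fib_1 less_one mult_0_right not_le not_less_eq_eq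
      numeral_2_eq_2 add_0 linorder_not_less)

lemma odd_fib_not_Suc: "odd_fib q \<Longrightarrow> \<not> odd_fib (Suc q)"
proof
  assume "odd_fib q" "odd_fib (Suc q)"
  then obtain k j where k: "1 \<le> k" "q = fib (2 * k + 1)" and j: "1 \<le> j" "Suc q = fib (2 * j + 1)"
    unfolding odd_fib_def by blast
  show False
  proof (cases "j \<le> k")
    case True
    then have "fib (2 * j + 1) \<le> fib (2 * k + 1)" by (intro fib_mono) simp
    with k j show False by simp
  next
    case False
    then have "fib (2 * k + 3) \<le> fib (2 * j + 1)" by (intro fib_mono) simp
    moreover have "fib (2 * k + 3) = fib (2 * k + 2) + fib (2 * k + 1)"
      using fib_plus_2[of "2 * k + 1"] by (simp add: numeral_eq_Suc)
    moreover have "3 \<le> fib (2 * k + 2)" using k(1) by (intro fib_ge_3) simp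
    ultimately show False using k j by linarith
  qed
qed

lemma beatty_near_fib_odd:
  assumes "1 \<le> k"
  shows "beatty (fib (2 * k + 1)) = fib (2 * k)"
    and "beatty (fib (2 * k + 1) - 1) = fib (2 * k) - 1"
    and "beatty (Suc (fib (2 * k + 1))) = fib (2 * k)"
proof -
  let ?q = "fib (2 * k + 1)"
  note e = fib_odd_mult_alpha[of k] and p = alpha_odd_power_bounds[OF assms]
  have e1: "real (?q - 1) * \<alpha> = real (fib (2 * k)) + \<alpha> ^ (2 * k + 1) - \<alpha>"
    using e fib_odd_ge_2[OF assms] by (simp add: of_nat_diff algebra_simps)
  have r: "real (fib (2 * k) - 1) = real (fib (2 * k)) - 1"
    using fib_even_pos[OF assms] by (simp add: of_nat_diff)
  have e2: "real (Suc ?q) * \<alpha> = real (fib (2 * k)) + \<alpha> ^ (2 * k + 1) + \<alpha>"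
    using e by (simp add: algebra_simps)
  show "beatty ?q = fib (2 * k)"
    by (rule beatty_eqI) (use e p alpha_bounds in linarith)+
  show "beatty (?q - 1) = fib (2 * k) - 1"
    by (rule beatty_eqI) (use e1 r p alpha_bounds in linarith)+
  show "beatty (Suc ?q) = fib (2 * k)"
    by (rule beatty_eqI) (use e2 p alpha_bounds in linarith)+
qed

lemma beatty_jumps_at_odd_fib:
  assumes "odd_fib q"
  shows "beatty_jumps (q - 1)" "\<not> beatty_jumps q" "1 \<le> beatty q"
proof -
  obtain k where k: "1 \<le> k" "q = fib (2 * k + 1)" using assms unfolding odd_fib_def by blast
  note b = beatty_near_fib_odd[OF k(1)]
  have "1 \<le> fib (2 * k)" "2 \<le> q" using fib_even_pos k fib_odd_ge_2 by auto
  with b k show "beatty_jumps (q - 1)" "\<not> beatty_jumps q" "1 \<le> beatty q"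
    unfolding beatty_jumps_def by simp_all
qed

lemma beatty_jumps_fib_even_pred:
  assumes "1 \<le> k" "beatty_jumps N" "beatty N = fib (2 * k) - 1"
  shows "Suc N = fib (2 * k + 1)"
proof -
  have q: "odd_fib (fib (2 * k + 1))" unfolding odd_fib_def using assms(1) by blast
  have "N = fib (2 * k + 1) - 1"
    using beatty_jumps_inj[OF assms(2) beatty_jumps_at_odd_fib(1)[OF q]]
      beatty_near_fib_odd(2)[OF assms(1)] assms(3) by simp
  then show ?thesis using fib_odd_ge_2[OF assms(1)] by simp
qed

section \<open>A closed form for \<open>z\<close>\<close>

definition near_odd_fib :: "nat \<Rightarrow> bool" where
  "near_odd_fib N \<longleftrightarrow> odd_fib N \<or> odd_fib (Suc N)"

definition z_level :: "nat \<Rightarrow> nat" where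
  "z_level n = beatty (Suc n) - of_bool (odd_fib (Suc n))"

definition z_closed :: "nat \<Rightarrow> nat" where
  "z_closed n =
    (if n < 2 then n
     else z_level (n - 1) + (if z_level n = Suc (z_level (n - 1)) then Suc n else 0))"

lemma z_closed_at_odd_fib:
  assumes "odd_fib N"
  shows "z_level (N - 1) = beatty N - 1" "z_level N = beatty N" "z_closed N = beatty N + N"
proof -
  note j = beatty_jumps_at_odd_fib[OF assms]
  have "2 \<le> N" using odd_fib_ge_2[OF assms] .
  then show "z_level (N - 1) = beatty N - 1" using assms unfolding z_level_def by simp
  moreover show "z_level N = beatty N"
    using odd_fib_not_Suc[OF assms] j(2) unfolding z_level_def by (simp add: beatty_Suc)
  ultimately show "z_closed N = beatty N + N"
    using \<open>2 \<le> N\<close> j(3) unfolding z_closed_def by simp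
qed

lemma z_closed_before_odd_fib:
  assumes "odd_fib (Suc N)" "2 \<le> N"
  shows "z_level (N - 1) = beatty N" "z_level N = beatty N" "z_closed N = beatty N"
proof -
  have "\<not> odd_fib N" using assms(1) odd_fib_not_Suc by blast
  then show "z_level (N - 1) = beatty N" using assms(2) unfolding z_level_def by simp
  moreover show "z_level N = beatty N"
    using beatty_jumps_at_odd_fib(1)[OF assms(1)] assms(1)
    unfolding z_level_def beatty_jumps_def by simp
  ultimately show "z_closed N = beatty N" using assms(2) unfolding z_closed_def by simp
qed

lemma z_closed_regular:
  assumes "\<not> near_odd_fib N" "2 \<le> N"
  shows "z_level (N - 1) = beatty N" "z_level N = beatty (Suc N)"
    "z_closed N = beatty N + (if beatty_jumps N then Suc N else 0)"
proof -
  show "z_level (N - 1) = beatty N" "z_level N = beatty (Suc N)"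
    using assms unfolding z_level_def near_odd_fib_def by simp_all
  then show "z_closed N = beatty N + (if beatty_jumps N then Suc N else 0)"
    using assms(2) unfolding z_closed_def beatty_jumps_def by simp
qed

lemma z_level_step:
  assumes "2 \<le> N"
  shows "z_level N = z_level (N - 1) \<or> z_level N = Suc (z_level (N - 1))"
  using assms z_closed_at_odd_fib[of N] z_closed_before_odd_fib[of N] z_closed_regular[of N]
    beatty_Suc[of N] beatty_jumps_at_odd_fib(3)[of N]
  unfolding near_odd_fib_def by (cases "odd_fib N"; cases "odd_fib (Suc N)") auto

lemma z_level_Suc_0: "z_level (Suc 0) = 0"
  unfolding z_level_def numeral_2_eq_2[symmetric] using odd_fib_2 by simp

lemma sum_z_closed: "1 \<le> n \<Longrightarrow> (\<Sum>i=2..n. z_closed i) = Suc n * z_level n"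
proof (induction n rule: dec_induct)
  case (step n)
  have "Suc n * z_level n + z_closed (Suc n) = Suc (Suc n) * z_level (Suc n)"
    using z_level_step[of "Suc n"] step.hyps unfolding z_closed_def by auto
  with step show ?case by simp
qed (simp add: z_level_Suc_0)

lemma z_closed_fib_odd: "1 \<le> k \<Longrightarrow> z_closed (fib (2 * k + 1)) = fib (2 * k + 2)"
  using z_closed_at_odd_fib(3)[OF odd_fib_fib] beatty_near_fib_odd(1) fib_plus_2[of "2 * k"] by simp

lemma z_closed_fib_odd_pred:
  assumes "1 \<le> k"
  shows "z_closed (fib (2 * k + 1) - 1) = (if k = 1 then 1 else fib (2 * k) - 1)"
proof (cases "k = 1")
  case True
  then show ?thesis by (simp add: z_closed_def numeral_eq_Suc)
next
  case False
  then have "fib 5 \<le> fib (2 * k + 1)" using assms by (intro fib_mono) simp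
  then have "2 \<le> fib (2 * k + 1) - 1" by (simp add: numeral_eq_Suc)
  then show ?thesis
    using False z_closed_before_odd_fib(3)[of "fib (2 * k + 1) - 1"] odd_fib_fib[OF assms]
      fib_odd_ge_2[OF assms] beatty_near_fib_odd(2)[OF assms] by simp
qed

lemma f_closed_fib_odd:
  assumes "1 \<le> k"
  shows "f_closed (fib (2 * k + 1)) = fib (2 * k + 2)"
proof -
  let ?q = "fib (2 * k + 1)"
  have "?q = Suc (?q - 1)" using fib_odd_ge_2[OF assms] by simp
  then have "f_closed ?q = beatty (?q - 1) + 1 + ?q"
    using f_closed_Suc[of "?q - 1"] beatty_jumps_at_odd_fib(1)[OF odd_fib_fib[OF assms]] by simp
  then show ?thesis
    using beatty_near_fib_odd(2)[OF assms] fib_even_pos[OF assms] fib_plus_2[of "2 * k"] by simp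
qed

lemma f_closed_Suc_fib_odd: "1 \<le> k \<Longrightarrow> f_closed (Suc (fib (2 * k + 1))) = fib (2 * k) + 1"
  using f_closed_Suc beatty_jumps_at_odd_fib(2)[OF odd_fib_fib] beatty_near_fib_odd(1) by simp

lemma near_odd_fib_cases:
  assumes "near_odd_fib N"
  obtains (at) k where "1 \<le> k" "N = fib (2 * k + 1)"
    | (pred) k where "1 \<le> k" "N = fib (2 * k + 1) - 1"
  using assms unfolding near_odd_fib_def odd_fib_def by (metis diff_Suc_1)

lemma z_closed_not_near_odd_fib:
  assumes "\<not> near_odd_fib N"
  shows "z_closed N = f_closed (Suc N) - 1"
proof (cases "2 \<le> N")
  case True
  then show ?thesis using z_closed_regular(3)[OF assms] by (simp add: f_closed_Suc)
next
  case False
  moreover have "near_odd_fib 1"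
    unfolding near_odd_fib_def odd_fib_def
    by (rule disjI2, rule exI[of _ 1]) (simp add: numeral_eq_Suc)
  then have "N \<noteq> 1" using assms by auto
  ultimately have "N = 0" by simp
  then show ?thesis by (simp add: z_closed_def f_closed_Suc)
qed

lemma z_closed_near_odd_fib:
  assumes "near_odd_fib N"
  shows "\<exists>y. near_odd_fib y \<and> z_closed N = f_closed (Suc y) - 1"
  using assms
proof (cases rule: near_odd_fib_cases)
  case (at k)
  then have "near_odd_fib (fib (2 * (k + 1) + 1))"
    "z_closed N = f_closed (Suc (fib (2 * (k + 1) + 1))) - 1"
    using odd_fib_fib[of "k + 1"] z_closed_fib_odd f_closed_Suc_fib_odd[of "k + 1"]
    by (simp_all add: near_odd_fib_def)
  then show ?thesis by blast
next
  case (pred k)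
  show ?thesis
  proof (cases "k = 1")
    case True
    then have "z_closed N = f_closed (Suc 2) - 1"
      using pred f_closed_Suc_fib_odd[of 1] by (simp add: z_closed_def numeral_eq_Suc)
    then show ?thesis using odd_fib_2 near_odd_fib_def by blast
  next
    case False
    let ?y = "fib (2 * (k - 1) + 1) - 1"
    have k: "1 \<le> k - 1" "2 * (k - 1) + 2 = 2 * k" using pred False by simp_all
    have "Suc ?y = fib (2 * (k - 1) + 1)" using fib_odd_ge_2[OF k(1)] by simp
    moreover have "fib (2 * (k - 1) + 2) = fib (2 * k)" by (simp only: k(2))
    ultimately have "near_odd_fib ?y" "f_closed (Suc ?y) = fib (2 * k)"
      using odd_fib_fib[OF k(1)] f_closed_fib_odd[OF k(1)] by (simp_all add: near_odd_fib_def)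
    moreover have "z_closed N = fib (2 * k) - 1" using pred False z_closed_fib_odd_pred by simp
    ultimately show ?thesis by metis
  qed
qed

lemma z_closed_fib_odd_neq_pred:
  assumes "1 \<le> k" "1 \<le> j"
  shows "z_closed (fib (2 * k + 1)) \<noteq> z_closed (fib (2 * j + 1) - 1)"
proof -
  have "3 \<le> fib (2 * k + 2)" by (rule fib_ge_3) (use assms in simp)
  moreover have "fib (2 * j) - 1 \<noteq> fib (2 * k + 2)"
  proof (cases "j \<le> k + 1")
    case True
    then have "fib (2 * j) \<le> fib (2 * k + 2)" by (intro fib_mono) simp
    then show ?thesis using \<open>3 \<le> fib (2 * k + 2)\<close> by linarith
  next
    case False
    then have "fib (2 * k + 4) \<le> fib (2 * j)" by (intro fib_mono) simp
    moreover have "fib (2 * k + 4) = fib (2 * k + 3) + fib (2 * k + 2)"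
      using fib_plus_2[of "2 * k + 2"] by (simp add: numeral_eq_Suc)
    moreover have "2 \<le> fib (2 * k + 3)" using fib_odd_ge_2[of "k + 1"] by (simp add: numeral_eq_Suc)
    ultimately show ?thesis by linarith
  qed
  ultimately show ?thesis using assms z_closed_fib_odd z_closed_fib_odd_pred by simp
qed

lemma z_closed_fib_odd_pred_less:
  assumes "1 \<le> k" "k < j"
  shows "z_closed (fib (2 * k + 1) - 1) < z_closed (fib (2 * j + 1) - 1)"
proof -
  have "3 \<le> fib (2 * j)" by (rule fib_ge_3) (use assms in simp)
  moreover have "1 < k \<Longrightarrow> fib (2 * k) < fib (2 * j)" using assms by (intro fib_strict_mono) auto
  ultimately show ?thesis using assms z_closed_fib_odd_pred by auto
qed

lemma inj_on_z_closed_near_odd_fib: "inj_on z_closed {N. near_odd_fib N}"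
proof (rule inj_onI, simp)
  fix a b assume a: "near_odd_fib a" and b: "near_odd_fib b" and eq: "z_closed a = z_closed b"
  from a b show "a = b"
  proof (cases rule: near_odd_fib_cases[case_product near_odd_fib_cases])
    case (at_at k j)
    then show ?thesis
      using eq fib_inj[of "2 * k + 2" "2 * j + 2"] z_closed_fib_odd by simp
  next
    case (pred_pred k j)
    then have "k = j"
      using eq z_closed_fib_odd_pred_less[of k j] z_closed_fib_odd_pred_less[of j k]
      by (metis linorder_neq_iff less_irrefl)
    then show ?thesis using pred_pred by simp
  next
    case (at_pred k j)
    then show ?thesis using eq z_closed_fib_odd_neq_pred[of k j] by simp
  next
    case (pred_at k j)
    then show ?thesis using eq z_closed_fib_odd_neq_pred[of j k] by simp
  qed
qed

lemma z_closed_eq_f_closed_Suc: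
  obtains y where "z_closed N = f_closed (Suc y) - 1"
    "near_odd_fib y \<longleftrightarrow> near_odd_fib N" "\<not> near_odd_fib N \<Longrightarrow> y = N"
proof (cases "near_odd_fib N")
  case True
  then show ?thesis using z_closed_near_odd_fib that by blast
next
  case False
  then show ?thesis using z_closed_not_near_odd_fib that by blast
qed

lemma inj_z_closed: "inj z_closed"
proof (rule injI)
  fix a b assume eq: "z_closed a = z_closed b"
  show "a = b"
  proof (cases "near_odd_fib a \<and> near_odd_fib b")
    case True
    with eq inj_on_z_closed_near_odd_fib show ?thesis by (auto dest: inj_onD)
  next
    case False
    obtain ya where ya: "z_closed a = f_closed (Suc ya) - 1"
      "near_odd_fib ya \<longleftrightarrow> near_odd_fib a" "\<not> near_odd_fib a \<Longrightarrow> ya = a"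
      by (rule z_closed_eq_f_closed_Suc[of a]) auto
    obtain yb where yb: "z_closed b = f_closed (Suc yb) - 1"
      "near_odd_fib yb \<longleftrightarrow> near_odd_fib b" "\<not> near_odd_fib b \<Longrightarrow> yb = b"
      by (rule z_closed_eq_f_closed_Suc[of b]) auto
    have "f_closed (Suc ya) = f_closed (Suc yb)"
      using eq ya(1) yb(1) by (simp add: f_closed_Suc)
    then have "ya = yb" using inj_f_closed by (simp add: inj_eq)
    with False ya yb show ?thesis by auto
  qed
qed

lemma z_closed_hits_fib_even:
  assumes "1 \<le> k" "fib (2 * k + 1) \<le> N"
  shows "\<exists>y<N. z_closed y = fib (2 * k)"
proof (cases "k = 1")
  case True
  then have "1 < N" "z_closed 1 = fib (2 * k)"
    using assms(2) by (simp_all add: z_closed_def numeral_eq_Suc)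
  then show ?thesis by blast
next
  case False
  let ?y = "fib (2 * (k - 1) + 1)"
  have k: "1 \<le> k - 1" "2 * (k - 1) + 2 = 2 * k" using assms(1) False by simp_all
  have "z_closed ?y = fib (2 * k)" using z_closed_fib_odd[OF k(1)] by (simp only: k(2))
  moreover have "?y < fib (2 * k + 1)" using k by (intro fib_strict_mono) simp_all
  ultimately show ?thesis using assms(2) by (intro exI[of _ ?y]) simp
qed

lemma beatty_value_used:
  assumes "\<not> near_odd_fib N" "beatty_jumps N"
  shows "\<exists>y<N. z_closed y = beatty N"
proof -
  define i where "i = f_closed (beatty N + 1) - 1"
  have "f_closed (beatty N + 1) \<in> {1..N}" using f_closed_at_jump[OF assms(2)] .
  then have i: "i < N" "f_closed (Suc i) = beatty N + 1"
    unfolding i_def by (auto simp: Suc_diff_le)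
  show ?thesis
  proof (cases "near_odd_fib i")
    case False
    then show ?thesis using i z_closed_not_near_odd_fib by (intro exI[of _ i]) simp
  next
    case True
    then show ?thesis
    proof (cases rule: near_odd_fib_cases)
      case (at k)
      then have b: "beatty N = fib (2 * k)" using i(2) f_closed_Suc_fib_odd by simp
      have "fib (2 * k + 1) \<le> N"
      proof (rule ccontr)
        assume "\<not> fib (2 * k + 1) \<le> N"
        then have "beatty N \<le> beatty (fib (2 * k + 1) - 1)" by (intro beatty_mono) simp
        then show False using b beatty_near_fib_odd(2) fib_even_pos at(1) by fastforce
      qed
      then show ?thesis using z_closed_hits_fib_even at(1) b by simp
    next
      case (pred k)
      then have "Suc i = fib (2 * k + 1)" using fib_odd_ge_2[OF pred(1)] by simp
      then have "beatty N = fib (2 * (k + 1)) - 1" using i(2) f_closed_fib_odd[OF pred(1)] by simp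
      moreover have "1 \<le> k + 1" by simp
      ultimately have "Suc N = fib (2 * (k + 1) + 1)"
        using beatty_jumps_fib_even_pred assms(2) by blast
      then show ?thesis using assms(1) odd_fib_fib[of "k + 1"] by (simp add: near_odd_fib_def)
    qed
  qed
qed

lemma z_level_jump_value_used:
  assumes "2 \<le> N" "z_level N = Suc (z_level (N - 1))"
  shows "\<exists>y<N. z_closed y = z_level (N - 1)"
proof (cases "odd_fib N")
  case True
  then obtain k where k: "1 \<le> k" "N = fib (2 * k + 1)" unfolding odd_fib_def by blast
  then have c: "z_level (N - 1) = fib (2 * k) - 1"
    using z_closed_at_odd_fib(1)[OF True] beatty_near_fib_odd(1) by simp
  show ?thesis
  proof (cases "k = 1")
    case True
    then show ?thesis using c assms(1) by (intro exI[of _ 0]) (simp add: z_closed_def)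
  next
    case False
    then show ?thesis using c k assms(1) z_closed_fib_odd_pred by (intro exI[of _ "N - 1"]) simp
  qed
next
  case False
  have "\<not> odd_fib (Suc N)" using z_closed_before_odd_fib[of N] assms by auto
  with False have "z_level (N - 1) = beatty N" "beatty_jumps N"
    using z_closed_regular[of N] assms unfolding near_odd_fib_def beatty_jumps_def by auto
  with False \<open>\<not> odd_fib (Suc N)\<close> show ?thesis
    using beatty_value_used unfolding near_odd_fib_def by simp
qed

lemma zvals_eq_map_z_closed: "zvals n = map z_closed [0..<Suc n]"
proof (induction n)
  case (Suc n)
  have used: "set (zvals n) = z_closed ` {0..n}"
    unfolding Suc.IH by (simp only: set_map set_upt atLeastLessThanSuc_atLeastAtMost)
  have "(LEAST v. v \<notin> set (zvals n) \<and>
      (Suc n + 1) dvd (if Suc n \<ge> 2 then sum_list (drop 2 (zvals n)) + v else 0))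
    = z_closed (Suc n)"
  proof (cases "n = 0")
    case True
    then show ?thesis using Suc.IH by (simp add: z_closed_def) (rule Least_equality; simp)
  next
    case False
    have "drop 2 (zvals n) = map z_closed [2..<Suc n]"
      using Suc.IH by (simp add: drop_map numeral_2_eq_2)
    then have sum: "sum_list (drop 2 (zvals n)) = Suc n * z_level n"
      using False by (simp only: sum_list_map_upt_Suc sum_z_closed)
    let ?c = "z_level (Suc n - 1)"
    have "?c \<le> Suc n" using beatty_less[of "Suc n"] by (simp add: z_level_def)
    moreover have "z_closed (Suc n) \<notin> z_closed ` {0..n}"
      using inj_z_closed by (auto simp: inj_eq)
    moreover have "?c \<in> z_closed ` {0..n}" if jump: "z_level (Suc n) = Suc ?c"
    proof -
      obtain y where "y < Suc n" "z_closed y = ?c"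
        using z_level_jump_value_used[of "Suc n", OF _ jump] False by auto
      then show ?thesis by (intro image_eqI[of _ _ y]) auto
    qed
    ultimately have "(LEAST v. v \<notin> z_closed ` {0..n} \<and> Suc (Suc n) dvd Suc n * ?c + v)
        = z_closed (Suc n)"
      using False by (intro Least_unused_residue) (auto simp: z_closed_def)
    then show ?thesis using False unfolding used sum by simp
  qed
  then show ?case using Suc.IH by simp
qed (simp add: z_closed_def)

lemma zseq_eq_z_closed: "zseq n = z_closed n"
  unfolding zseq_def zvals_eq_map_z_closed by simp

lemma z_closed_eq_f_closed_iff:
  assumes "2 \<le> n"
  shows "z_closed n = f_closed n \<longleftrightarrow> odd_fib n"
proof -
  obtain m where m: "n = Suc m" using assms by (cases n) auto
  have f: "f_closed n = beatty n + (if beatty_jumps m then n else 1)"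
    using m f_closed_Suc beatty_Suc[of m] by simp
  show ?thesis
  proof (cases "odd_fib n")
    case True
    then show ?thesis
      using f m z_closed_at_odd_fib(3)[OF True] beatty_jumps_at_odd_fib(1)[OF True] by simp
  next
    case False
    have "z_closed n \<noteq> f_closed n"
    proof (cases "odd_fib (Suc n)")
      case True
      then show ?thesis using f z_closed_before_odd_fib(3)[OF True assms] assms by simp
    next
      case False
      then show ?thesis
        using \<open>\<not> odd_fib n\<close> f z_closed_regular(3)[of n] assms unfolding near_odd_fib_def by simp
    qed
    then show ?thesis using False by simp
  qed
qed

theorem mainTheorem8:
  fixes n :: nat
  shows "zseq n = fseq n \<longleftrightarrow> (n = 0 \<or> (\<exists>k::nat. n = fib (2 * k + 1)))"
proof -
  consider "n = 0" | "n = 1" | "2 \<le> n" by linarith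
  then show ?thesis
  proof cases
    case 2
    moreover have "\<exists>k::nat. 1 = fib (2 * k + 1)" by (rule exI[of _ 0]) simp
    ultimately show ?thesis
      unfolding zseq_eq_z_closed fseq_eq_f_closed by (simp add: z_closed_def f_closed_Suc)
  next
    case 3
    then show ?thesis
      unfolding zseq_eq_z_closed fseq_eq_f_closed z_closed_eq_f_closed_iff[OF 3] odd_fib_iff[OF 3]
      by simp
  qed (simp add: zseq_eq_z_closed fseq_eq_f_closed z_closed_def)
qed

end
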